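(* Let $S$ be a UFD and let $F,F'$ be nonzero elements of $S\setminus U(S)$. For $C\in\{0\}\cup U(S)$ write $F-C=F_{C,0}F_{C,1}^{E(C,1)}\cdots F_{C,Q(C)}^{E(C,Q(C))}$ with $F_{C,0}\in U(S)$, integers $1\le E(C,1)\le\dots\le E(C,Q(C))$, and pairwise coprime irreducible $F_{C,1},\dots,F_{C,Q(C)}\in S\setminus U(S)$; let $F'-C=F'_{C,0}F'^{E'(C,1)}_{C,1}\cdots F'^{E'(C,Q'(C))}_{C,Q'(C)}$ be the corresponding factorization of $F'-C$. Assume there is a ring isomorphism $\Delta:S[1/F]\to S[1/F']$ with $\Delta(U(S))=U(S)$. Then (i) $Q(0)=Q'(0)$; and (ii) if $F$ and $F'$ are irreducible in $S$, there exists a bijection $\Theta:U(S)\to U(S)$ such that for all $C\in U(S)$ we have $Q(C)=Q'(\Theta(C))$ and $E(C,i)=E'(\Theta(C),i)$ for $1\le i\le Q(C)$.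
   Context: $U(S)$ denotes the group of units of $S$. *)

theory Defs
  imports "HOL-Computational_Algebra.Factorial_Ring" "HOL-Computational_Algebra.Fraction_Field"
begin

text \<open>The UFD S is a type 'a of class {factorial_semiring, idom}.
  U(S) = {c. is_unit c}. S is embedded into its fraction field via (\<lambda>a. Fract a 1).\<close>

definition units_S :: "'a::{factorial_semiring,idom} set" where
  "units_S = {c. is_unit c}"

definition localization :: "'a::{factorial_semiring,idom} \<Rightarrow> 'a fract set" where
  "localization F = {Fract a (F ^ n) | a n. True}"

definition ring_iso_on :: "('a::comm_ring_1 \<Rightarrow> 'b::comm_ring_1) \<Rightarrow> 'a set \<Rightarrow> 'b set \<Rightarrow> bool" where
  "ring_iso_on D A B \<longleftrightarrow> bij_betw D A B \<and> D 1 = 1 \<and>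
     (\<forall>x\<in>A. \<forall>y\<in>A. D (x + y) = D x + D y \<and> D (x * y) = D x * D y)"

definition nfactors :: "'a::{factorial_semiring,idom} \<Rightarrow> nat" where
  "nfactors x = card (prime_factors x)"

text \<open>E(x,1) \<le> ... \<le> E(x,Q(x)): the sorted list of exponents; E(x,i) = exps x ! (i-1).\<close>
definition exps :: "'a::{factorial_semiring,idom} \<Rightarrow> nat list" where
  "exps x = sorted_list_of_multiset
      (image_mset (\<lambda>p. multiplicity p x) (mset_set (prime_factors x)))"

end

theory Submission
  imports Defs "HOL-Computational_Algebra.Primes"
begin

text \<open>A unit of S[1/F] is, up to a unit of S, a product of powers of the prime factors of F,
  with integer exponents. Modulo units of S and squares these units therefore form the group
  (Z/2)^Q(0), a class being determined by the set of prime factors of F at which the exponent is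
  odd. An isomorphism mapping U(S) onto U(S) preserves this quotient, hence 2^Q(0) = 2^Q'(0).

  If F is prime, the units of S[1/F] are the c F^k with k an integer, so \<Delta> F = c F' or
  \<Delta> F = c / F', and accordingly \<Delta>(F - C) is a unit of S[1/F'] times F' - \<Theta> C with
  \<Theta> C = \<Delta>(C) / c or \<Theta> C = c / \<Delta>(C). The prime factors of F - C do not divide F,
  so they remain irreducible in S[1/F], and \<Delta> matches them, multiplicities included, with
  those of F' - \<Theta> C.\<close>

definition is_subring :: "'b::comm_ring_1 set \<Rightarrow> bool" where
  "is_subring A \<longleftrightarrow> 1 \<in> A \<and> 0 \<in> A \<and> (\<forall>x\<in>A. \<forall>y\<in>A. x + y \<in> A \<and> x * y \<in> A \<and> - x \<in> A)"

definition unit_in :: "'b::comm_ring_1 set \<Rightarrow> 'b \<Rightarrow> bool" where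
  "unit_in A x \<longleftrightarrow> x \<in> A \<and> (\<exists>y\<in>A. x * y = 1)"

definition dvd_in :: "'b::comm_ring_1 set \<Rightarrow> 'b \<Rightarrow> 'b \<Rightarrow> bool" where
  "dvd_in A a b \<longleftrightarrow> (\<exists>r\<in>A. b = a * r)"

definition irreducible_in :: "'b::comm_ring_1 set \<Rightarrow> 'b \<Rightarrow> bool" where
  "irreducible_in A a \<longleftrightarrow> a \<in> A \<and> a \<noteq> 0 \<and> \<not> unit_in A a \<and>
     (\<forall>b\<in>A. \<forall>c\<in>A. a = b * c \<longrightarrow> unit_in A b \<or> unit_in A c)"

lemma
  assumes "is_subring A"
  shows subring_one: "1 \<in> A" and subring_zero: "0 \<in> A"
    and subring_add: "x \<in> A \<Longrightarrow> y \<in> A \<Longrightarrow> x + y \<in> A"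
    and subring_mult: "x \<in> A \<Longrightarrow> y \<in> A \<Longrightarrow> x * y \<in> A"
    and subring_uminus: "x \<in> A \<Longrightarrow> - x \<in> A"
  using assms unfolding is_subring_def by auto

lemma subring_power: "is_subring A \<Longrightarrow> x \<in> A \<Longrightarrow> x ^ n \<in> A"
  by (induction n) (auto intro: subring_one subring_mult)

lemma unit_inE:
  assumes "unit_in A u"
  obtains v where "v \<in> A" "u * v = 1" "unit_in A v"
  using assms unfolding unit_in_def by (auto simp: mult.commute)

lemma unit_in_mem: "unit_in A u \<Longrightarrow> u \<in> A"
  unfolding unit_in_def by blast

lemma unit_in_mult:
  assumes A: "is_subring A" and "unit_in A u" "unit_in A v"
  shows "unit_in A (u * v)"
proof -
  obtain u' v' where "u' \<in> A" "u * u' = 1" "v' \<in> A" "v * v' = 1"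
    using assms(2,3) by (metis unit_inE)
  moreover have "u * v * (u' * v') = (u * u') * (v * v')" by (simp add: mult_ac)
  ultimately show ?thesis
    unfolding unit_in_def using assms unit_in_mem subring_mult by (metis mult_1_right)
qed

lemma unit_in_power:
  assumes A: "is_subring A" and u: "unit_in A u"
  shows "unit_in A (u ^ k)"
proof (induction k)
  case 0
  then show ?case using subring_one[OF A] by (auto simp: unit_in_def)
next
  case (Suc k)
  then show ?case using unit_in_mult[OF A u] by simp
qed

lemma dvd_in_unit_mult_left:
  assumes A: "is_subring A" and u: "unit_in A u"
  shows "dvd_in A (u * a) b \<longleftrightarrow> dvd_in A a b"
proof
  assume "dvd_in A (u * a) b"
  then obtain r where "r \<in> A" "b = a * (u * r)" unfolding dvd_in_def by (auto simp: mult_ac)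
  then show "dvd_in A a b"
    unfolding dvd_in_def using subring_mult[OF A] unit_in_mem[OF u] by blast
next
  assume "dvd_in A a b"
  then obtain r where "r \<in> A" "b = a * r" unfolding dvd_in_def by blast
  moreover obtain u' where "u' \<in> A" "u * u' = 1" using u by (rule unit_inE)
  ultimately have "b = u * a * (u' * r)" "u' * r \<in> A"
    using subring_mult[OF A] by (auto simp: mult_ac)
  then show "dvd_in A (u * a) b" unfolding dvd_in_def by blast
qed

lemma dvd_in_unit_mult_right:
  assumes A: "is_subring A" and u: "unit_in A u"
  shows "dvd_in A a (u * b) \<longleftrightarrow> dvd_in A a b"
proof
  assume "dvd_in A a (u * b)"
  then obtain r where r: "r \<in> A" "u * b = a * r" unfolding dvd_in_def by blast
  obtain u' where "u' \<in> A" "u * u' = 1" using u by (rule unit_inE)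
  with r have "b = a * (u' * r)" "u' * r \<in> A"
    using subring_mult[OF A] by (auto simp: mult_ac) (metis mult.assoc mult.commute mult_1_right)
  then show "dvd_in A a b" unfolding dvd_in_def by blast
next
  assume "dvd_in A a b"
  then obtain r where "r \<in> A" "b = a * r" unfolding dvd_in_def by blast
  then have "u * b = a * (u * r)" "u * r \<in> A"
    using subring_mult[OF A] unit_in_mem[OF u] by (auto simp: mult_ac)
  then show "dvd_in A a (u * b)" unfolding dvd_in_def by blast
qed

locale subring_iso =
  fixes D :: "'b::comm_ring_1 \<Rightarrow> 'c::comm_ring_1" and A B
  assumes iso: "ring_iso_on D A B" and subring_A: "is_subring A" and subring_B: "is_subring B"
begin

lemma bij: "bij_betw D A B"
  and hom_one: "D 1 = 1"
  and hom_add: "x \<in> A \<Longrightarrow> y \<in> A \<Longrightarrow> D (x + y) = D x + D y"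
  and hom_mult: "x \<in> A \<Longrightarrow> y \<in> A \<Longrightarrow> D (x * y) = D x * D y"
  using iso unfolding ring_iso_on_def by auto

lemma mem: "x \<in> A \<Longrightarrow> D x \<in> B"
  using bij bij_betwE by blast

lemma inj: "x \<in> A \<Longrightarrow> y \<in> A \<Longrightarrow> D x = D y \<longleftrightarrow> x = y"
  using bij unfolding bij_betw_def inj_on_def by blast

lemma surj: "y \<in> B \<Longrightarrow> \<exists>x\<in>A. y = D x"
  using bij by (metis bij_betw_imp_surj_on imageE)

lemma hom_zero: "D 0 = 0"
  using hom_add[of 0 0] subring_zero[OF subring_A] by simp

lemma hom_uminus: "x \<in> A \<Longrightarrow> D (- x) = - D x"
  using hom_add[of x "- x"] hom_zero subring_uminus[OF subring_A]
  by (simp add: add_eq_0_iff)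

lemma hom_diff: "x \<in> A \<Longrightarrow> y \<in> A \<Longrightarrow> D (x - y) = D x - D y"
  using hom_add[of x "- y"] hom_uminus[of y] subring_uminus[OF subring_A] by simp

lemma hom_power: "x \<in> A \<Longrightarrow> D (x ^ n) = D x ^ n"
  by (induction n) (auto simp: hom_one hom_mult subring_power[OF subring_A])

lemma unit_in_image: "unit_in A x \<Longrightarrow> unit_in B (D x)"
  unfolding unit_in_def using mem hom_mult hom_one by metis

lemma dvd_in_image: "a \<in> A \<Longrightarrow> dvd_in A a b \<Longrightarrow> dvd_in B (D a) (D b)"
  unfolding dvd_in_def using mem hom_mult by metis

lemma inv_inverse: "y \<in> B \<Longrightarrow> inv_into A D y \<in> A \<and> D (inv_into A D y) = y"
  using bij by (metis bij_betw_imp_surj_on f_inv_into_f inv_into_into)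

lemma inverse_inv: "x \<in> A \<Longrightarrow> inv_into A D (D x) = x"
  using bij bij_betw_inv_into_left by fastforce

lemma subring_iso_inv: "subring_iso (inv_into A D) B A"
proof -
  let ?E = "inv_into A D"
  have "?E (x + y) = ?E x + ?E y \<and> ?E (x * y) = ?E x * ?E y" if "x \<in> B" "y \<in> B" for x y
  proof -
    have "x + y = D (?E x + ?E y)" "x * y = D (?E x * ?E y)"
      using inv_inverse that hom_add hom_mult by auto
    then show ?thesis
      using inverse_inv inv_inverse that subring_add[OF subring_A] subring_mult[OF subring_A] by metis
  qed
  moreover have "?E 1 = 1"
    using inverse_inv[of 1] hom_one subring_one[OF subring_A] by simp
  ultimately show ?thesis
    using bij_betw_inv_into[OF bij] subring_A subring_B
    unfolding subring_iso_def ring_iso_on_def by auto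
qed

lemma unit_in_image_iff: "x \<in> A \<Longrightarrow> unit_in B (D x) \<longleftrightarrow> unit_in A x"
  using unit_in_image subring_iso.unit_in_image[OF subring_iso_inv] inverse_inv by metis

lemma dvd_in_image_iff: "a \<in> A \<Longrightarrow> b \<in> A \<Longrightarrow> dvd_in B (D a) (D b) \<longleftrightarrow> dvd_in A a b"
  using dvd_in_image subring_iso.dvd_in_image[OF subring_iso_inv] inverse_inv mem by metis

lemma irreducible_in_image:
  assumes "irreducible_in A a"
  shows "irreducible_in B (D a)"
proof -
  have a: "a \<in> A" "a \<noteq> 0" "\<not> unit_in A a"
    and split: "\<And>b c. b \<in> A \<Longrightarrow> c \<in> A \<Longrightarrow> a = b * c \<Longrightarrow> unit_in A b \<or> unit_in A c"
    using assms unfolding irreducible_in_def by auto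
  have "unit_in B b \<or> unit_in B c" if bc: "b \<in> B" "c \<in> B" "D a = b * c" for b c
  proof -
    obtain b' c' where "b' \<in> A" "c' \<in> A" "b = D b'" "c = D c'"
      using surj bc(1,2) by metis
    with bc a have "a = b' * c'"
      using inj subring_mult[OF subring_A] by (metis hom_mult)
    then show ?thesis using split unit_in_image \<open>b' \<in> A\<close> \<open>c' \<in> A\<close> \<open>b = D b'\<close> \<open>c = D c'\<close> by blast
  qed
  moreover have "D a \<noteq> 0" using inj[of a 0] a hom_zero subring_zero[OF subring_A] by auto
  ultimately show ?thesis
    unfolding irreducible_in_def using a mem unit_in_image_iff by blast
qed

end

lemma localization_iff: "x \<in> localization F \<longleftrightarrow> (\<exists>a n. x = Fract a (F ^ n))"
  by (auto simp: localization_def)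

lemma Fract_in_localization: "Fract a (F ^ n) \<in> localization F"
  by (auto simp: localization_def)

lemma Fract_1_in_localization: "Fract c 1 \<in> localization F"
  using Fract_in_localization[of c F 0] by simp

lemma is_subring_localization:
  fixes F :: "'a::{factorial_semiring,idom}"
  assumes F: "F \<noteq> 0"
  shows "is_subring (localization F)"
proof -
  have "x + y \<in> localization F \<and> x * y \<in> localization F \<and> - x \<in> localization F"
    if xy: "x \<in> localization F" "y \<in> localization F" for x y
  proof -
    obtain a b n m where "x = Fract a (F ^ n)" "y = Fract b (F ^ m)"
      using xy unfolding localization_iff by blast
    moreover have "Fract a (F ^ n) + Fract b (F ^ m) = Fract (a * F ^ m + b * F ^ n) (F ^ (n + m))"
      "Fract a (F ^ n) * Fract b (F ^ m) = Fract (a * b) (F ^ (n + m))"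
      using F by (simp_all add: power_add)
    ultimately show ?thesis by (simp add: Fract_in_localization)
  qed
  moreover have "1 \<in> localization F" "0 \<in> localization F"
    using Fract_1_in_localization[of 1 F] Fract_1_in_localization[of 0 F]
    by (simp_all add: One_fract_def Zero_fract_def)
  ultimately show ?thesis unfolding is_subring_def by blast
qed

lemma unit_in_localization_iff:
  fixes F :: "'a::{factorial_semiring,idom}"
  assumes F: "F \<noteq> 0"
  shows "unit_in (localization F) (Fract a (F ^ n)) \<longleftrightarrow> a \<noteq> 0 \<and> (\<exists>m. a dvd F ^ m)"
proof
  assume "unit_in (localization F) (Fract a (F ^ n))"
  then obtain y where "y \<in> localization F" "Fract a (F ^ n) * y = 1"
    unfolding unit_in_def by blast
  then obtain b m where "Fract a (F ^ n) * Fract b (F ^ m) = Fract 1 1"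
    unfolding localization_iff One_fract_def by blast
  then have "a * b = F ^ (n + m)" using F by (simp add: eq_fract power_add)
  moreover have "F ^ (n + m) \<noteq> 0" using F by simp
  ultimately show "a \<noteq> 0 \<and> (\<exists>m. a dvd F ^ m)" by (metis dvd_triv_left mult_eq_0_iff)
next
  assume "a \<noteq> 0 \<and> (\<exists>m. a dvd F ^ m)"
  then obtain m c where c: "F ^ m = a * c" by blast
  then have "Fract a (F ^ n) * Fract (c * F ^ n) (F ^ m) = 1"
    using F by (simp add: One_fract_def eq_fract c[symmetric])
  then show "unit_in (localization F) (Fract a (F ^ n))"
    unfolding unit_in_def using Fract_in_localization by blast
qed

lemma unit_in_localizationE:
  fixes F :: "'a::{factorial_semiring,idom}"
  assumes F: "F \<noteq> 0" and "unit_in (localization F) x"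
  obtains a n m where "x = Fract a (F ^ n)" "a \<noteq> 0" "a dvd F ^ m"
  using assms unit_in_localization_iff[OF F] unfolding unit_in_def localization_iff by metis

lemma unit_in_localization_Fract_1:
  fixes F :: "'a::{factorial_semiring,idom}"
  assumes "F \<noteq> 0" "a \<noteq> 0" "a dvd F ^ m"
  shows "unit_in (localization F) (Fract a 1)"
  using unit_in_localization_iff[of F a 0] assms by auto

lemma prime_divisors_dvd_imp_dvd_power:
  fixes F b :: "'a::factorial_semiring"
  assumes F: "F \<noteq> 0" and b: "b \<noteq> 0" and h: "\<And>q. prime q \<Longrightarrow> q dvd b \<Longrightarrow> q dvd F"
  shows "\<exists>K. b dvd F ^ K"
proof -
  define K where "K = (\<Sum>r\<in>prime_factors b. multiplicity r b)"
  have "b dvd F ^ K"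
  proof (rule multiplicity_le_imp_dvd[OF b])
    fix r :: 'a assume r: "prime r"
    show "multiplicity r b \<le> multiplicity r (F ^ K)"
    proof (cases "r dvd b")
      case True
      then have "multiplicity r F > 0" "r \<in> prime_factors b"
        using h[OF r] F b r by (simp_all add: prime_multiplicity_gt_zero_iff in_prime_factors_iff)
      then have "multiplicity r b \<le> K * multiplicity r F"
        unfolding K_def using member_le_sum[of r "prime_factors b" "\<lambda>r. multiplicity r b"]
        by (simp add: le_trans)
      then show ?thesis using r F by (simp add: prime_elem_multiplicity_power_distrib)
    qed (simp add: not_dvd_imp_multiplicity_0)
  qed
  then show ?thesis by blast
qed

definition preserves_constant_units :: "('a::{factorial_semiring,idom} fract \<Rightarrow> 'a fract) \<Rightarrow> bool" where
  "preserves_constant_units D \<longleftrightarrow> (\<forall>c. is_unit c \<longrightarrow> (\<exists>c'. is_unit c' \<and> D (Fract c 1) = Fract c' 1))"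

lemma preserves_constant_unitsD:
  assumes "preserves_constant_units D" "is_unit c"
  obtains c' where "is_unit c'" "D (Fract c 1) = Fract c' 1"
  using assms unfolding preserves_constant_units_def by blast

lemma preserves_constant_units_iso_and_inverse:
  fixes F F' :: "'a::{factorial_semiring,idom}"
  assumes "subring_iso D (localization F) (localization F')"
    and "D ` ((\<lambda>c. Fract c 1) ` units_S) = (\<lambda>c. Fract c 1) ` units_S"
  shows "preserves_constant_units D" "preserves_constant_units (inv_into (localization F) D)"
proof -
  interpret subring_iso D "localization F" "localization F'" by fact
  have "\<exists>c'. is_unit c' \<and> D (Fract c 1) = Fract c' 1" if "is_unit c" for c
  proof -
    have "D (Fract c 1) \<in> D ` ((\<lambda>c. Fract c 1) ` units_S)" using that by (auto simp: units_S_def)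
    then show ?thesis unfolding assms(2) by (auto simp: units_S_def)
  qed
  then show "preserves_constant_units D"
    unfolding preserves_constant_units_def by blast
  have "\<exists>c'. is_unit c' \<and> inv_into (localization F) D (Fract c 1) = Fract c' 1" if "is_unit c" for c
  proof -
    have "Fract c 1 \<in> D ` ((\<lambda>c. Fract c 1) ` units_S)"
      unfolding assms(2) using that by (auto simp: units_S_def)
    then obtain c' where "is_unit c'" "Fract c 1 = D (Fract c' 1)" by (auto simp: units_S_def)
    then show ?thesis using inverse_inv[OF Fract_1_in_localization] by auto
  qed
  then show "preserves_constant_units (inv_into (localization F) D)"
    unfolding preserves_constant_units_def by blast
qed

section \<open>Square classes of units\<close>

definition localization_rep :: "'a::{factorial_semiring,idom} \<Rightarrow> 'a fract \<Rightarrow> 'a \<times> nat" where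
  "localization_rep F x = (SOME r. x = Fract (fst r) (F ^ snd r))"

text \<open>For x = a / F^n the valuation v_p a - n v_p F has the parity of v_p a + n v_p F.\<close>
definition odd_valuation_primes :: "'a::{factorial_semiring,idom} \<Rightarrow> 'a fract \<Rightarrow> 'a set" where
  "odd_valuation_primes F x = {p \<in> prime_factors F.
     odd (multiplicity p (fst (localization_rep F x)) + snd (localization_rep F x) * multiplicity p F)}"

definition square_class_equiv :: "'a::{factorial_semiring,idom} \<Rightarrow> 'a fract \<Rightarrow> 'a fract \<Rightarrow> bool" where
  "square_class_equiv F x y \<longleftrightarrow>
     (\<exists>c z. is_unit c \<and> unit_in (localization F) z \<and> x = Fract c 1 * z ^ 2 * y)"

lemma localization_rep:
  assumes "x \<in> localization F"
  shows "x = Fract (fst (localization_rep F x)) (F ^ snd (localization_rep F x))"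
proof -
  obtain a n where "x = Fract a (F ^ n)" using assms unfolding localization_iff by blast
  then have "\<exists>r. x = Fract (fst r) (F ^ snd r)" by (intro exI[of _ "(a, n)"]) simp
  then show ?thesis unfolding localization_rep_def by (rule someI_ex)
qed

lemma multiplicity_mult_power:
  fixes p :: "'a::factorial_semiring"
  assumes "prime_elem p" "a \<noteq> 0" "F \<noteq> 0"
  shows "multiplicity p (a * F ^ n) = multiplicity p a + n * multiplicity p F"
  using assms by (simp add: prime_elem_multiplicity_mult_distrib prime_elem_multiplicity_power_distrib)

lemma odd_valuation_Fract_cong:
  fixes F :: "'a::{factorial_semiring,idom}"
  assumes F: "F \<noteq> 0" and a: "a \<noteq> 0" and p: "prime p"
    and eq: "Fract a (F ^ n) = Fract a' (F ^ n')"
  shows "odd (multiplicity p a + n * multiplicity p F) \<longleftrightarrow> odd (multiplicity p a' + n' * multiplicity p F)"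
proof -
  have e: "a * F ^ n' = a' * F ^ n" using eq F by (simp add: eq_fract)
  then have "a' \<noteq> 0" using a F by auto
  with e have "multiplicity p a + n' * multiplicity p F = multiplicity p a' + n * multiplicity p F"
    using multiplicity_mult_power[of p] p a F by (metis prime_imp_prime_elem)
  then show ?thesis by presburger
qed

lemma odd_valuation_primes_Fract:
  fixes F :: "'a::{factorial_semiring,idom}"
  assumes "F \<noteq> 0" "a \<noteq> 0"
  shows "odd_valuation_primes F (Fract a (F ^ n)) =
    {p \<in> prime_factors F. odd (multiplicity p a + n * multiplicity p F)}"
  using odd_valuation_Fract_cong[OF assms] localization_rep[OF Fract_in_localization]
  unfolding odd_valuation_primes_def by blast

lemma square_class_equiv_imp_odd_valuation_primes_eq:
  fixes F :: "'a::{factorial_semiring,idom}"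
  assumes F: "F \<noteq> 0" and y: "unit_in (localization F) y" and equiv: "square_class_equiv F x y"
  shows "odd_valuation_primes F x = odd_valuation_primes F y"
proof -
  obtain c z where c: "is_unit c" and z: "unit_in (localization F) z" and x: "x = Fract c 1 * z ^ 2 * y"
    using equiv unfolding square_class_equiv_def by blast
  obtain b m k where z: "z = Fract b (F ^ m)" "b \<noteq> 0" using unit_in_localizationE[OF F z] by metis
  obtain a n k' where y: "y = Fract a (F ^ n)" "a \<noteq> 0" using unit_in_localizationE[OF F y] by metis
  have x: "x = Fract (c * b ^ 2 * a) (F ^ (m + m + n))"
    using x z y by (simp add: power2_eq_square power_add mult_ac)
  have "odd (multiplicity p (c * b ^ 2 * a) + (m + m + n) * multiplicity p F) \<longleftrightarrow>
        odd (multiplicity p a + n * multiplicity p F)" if "prime p" for p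
  proof -
    have "multiplicity p (c * b ^ 2 * a) = 2 * multiplicity p b + multiplicity p a"
      using that c z(2) y(2)
      by (simp add: mult.assoc multiplicity_times_unit_right prime_elem_multiplicity_mult_distrib
          prime_elem_multiplicity_power_distrib)
    then show ?thesis by (simp add: algebra_simps)
  qed
  moreover have "c * b ^ 2 * a \<noteq> 0" using c z(2) y(2) by auto
  ultimately show ?thesis
    unfolding x y(1) odd_valuation_primes_Fract[OF F y(2)] odd_valuation_primes_Fract[OF F \<open>c * b ^ 2 * a \<noteq> 0\<close>]
    by auto
qed

lemma even_multiplicities_imp_square_times_unit:
  fixes N :: "'a::factorial_semiring"
  assumes N: "N \<noteq> 0" and even: "\<And>p. prime p \<Longrightarrow> even (multiplicity p N)"
  obtains w c where "is_unit c" "w dvd N" "N = c * w ^ 2"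
proof -
  define w where "w = (\<Prod>p\<in>prime_factors N. p ^ (multiplicity p N div 2))"
  have w0: "w \<noteq> 0" unfolding w_def by (auto simp: in_prime_factors_iff)
  have "multiplicity q (w ^ 2) = multiplicity q N" if q: "prime q" for q
  proof -
    have "multiplicity q (w ^ 2) = (if q \<in> prime_factors N then multiplicity q N div 2 * 2 else 0)"
      unfolding w_def prod_power_distrib power_mult[symmetric] using q
      by (intro multiplicity_prod_prime_powers) auto
    also have "\<dots> = multiplicity q N"
      using even[OF q] q N by (auto simp: in_prime_factors_iff not_dvd_imp_multiplicity_0)
    finally show ?thesis .
  qed
  then have assoc: "normalize N = normalize (w ^ 2)"
    using w0 N by (intro multiplicity_eq_imp_eq) auto
  then obtain c where "is_unit c" "N = c * w ^ 2" by (rule associatedE1)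
  moreover have "w dvd N"
    using associatedD2[OF assoc] dvd_trans[of w "w ^ 2" N] by (simp add: power2_eq_square)
  ultimately show ?thesis using that by blast
qed

lemma odd_valuation_primes_eq_imp_square_class_equiv:
  fixes F :: "'a::{factorial_semiring,idom}"
  assumes F: "F \<noteq> 0" and x: "unit_in (localization F) x" and y: "unit_in (localization F) y"
    and eq: "odd_valuation_primes F x = odd_valuation_primes F y"
  shows "square_class_equiv F x y"
proof -
  obtain a n i where x: "x = Fract a (F ^ n)" and a: "a \<noteq> 0" "a dvd F ^ i"
    using unit_in_localizationE[OF F x] by metis
  obtain b m j where y: "y = Fract b (F ^ m)" and b: "b \<noteq> 0" "b dvd F ^ j"
    using unit_in_localizationE[OF F y] by metis
  define N where "N = a * b * F ^ (n + m)"
  have "even (multiplicity p N)" if p: "prime p" for p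
  proof -
    have mN: "multiplicity p N = multiplicity p a + multiplicity p b + (n + m) * multiplicity p F"
      using p a b F unfolding N_def
      by (simp add: prime_elem_multiplicity_mult_distrib prime_elem_multiplicity_power_distrib)
    show ?thesis
    proof (cases "p dvd F")
      case True
      then have "odd (multiplicity p a + n * multiplicity p F) \<longleftrightarrow> odd (multiplicity p b + m * multiplicity p F)"
        using eq p F unfolding x y odd_valuation_primes_Fract[OF F a(1)] odd_valuation_primes_Fract[OF F b(1)]
        by (auto simp: in_prime_factors_iff)
      then show ?thesis unfolding mN by (simp add: algebra_simps) presburger
    next
      case False
      then have "\<not> p dvd a" "\<not> p dvd b"
        using a(2) b(2) p by (metis dvd_trans prime_dvd_power)+
      then show ?thesis unfolding mN using False by (simp add: not_dvd_imp_multiplicity_0)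
    qed
  qed
  moreover have "N \<noteq> 0" using a b F by (simp add: N_def)
  ultimately obtain w c where c: "is_unit c" and w: "w dvd N" and Nwc: "N = c * w ^ 2"
    using even_multiplicities_imp_square_times_unit by metis
  obtain b' where b': "F ^ j = b * b'" using b(2) by blast
  define z where "z = Fract (w * b') (F ^ (n + j))"
  have "N dvd F ^ (i + j + (n + m))"
    unfolding N_def power_add using a(2) b(2) by (intro mult_dvd_mono) auto
  then have "w * b' dvd F ^ (i + j + (n + m) + j)"
    unfolding power_add[of F _ j] using w b' by (intro mult_dvd_mono) (auto intro: dvd_trans)
  moreover have "w \<noteq> 0" "b' \<noteq> 0" using Nwc \<open>N \<noteq> 0\<close> b' F by auto
  ultimately have z: "unit_in (localization F) z"
    unfolding z_def unit_in_localization_iff[OF F] by auto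
  \<comment> \<open>x / y = N / (b F^n)^2 = c (w b' / F^(n+j))^2\<close>
  have "c * (w * b') ^ 2 * b * F ^ n = N * b' * (b * b') * F ^ n"
    by (simp add: Nwc power2_eq_square mult_ac)
  also have "\<dots> = a * (b * b') * F ^ (n + m) * F ^ j * F ^ n"
    unfolding N_def b' by (simp add: mult_ac)
  also have "\<dots> = a * (1 * (F ^ (n + j)) ^ 2 * F ^ m)"
    unfolding b'[symmetric] by (simp add: power2_eq_square power_add mult_ac)
  finally have "x = Fract c 1 * z ^ 2 * y"
    unfolding x y z_def using F by (simp add: eq_fract power2_eq_square)
  then show ?thesis unfolding square_class_equiv_def using c z by blast
qed

lemma odd_valuation_primes_image:
  fixes F :: "'a::{factorial_semiring,idom}"
  assumes F: "F \<noteq> 0"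
  shows "odd_valuation_primes F ` {x. unit_in (localization F) x} = Pow (prime_factors F)"
proof
  show "odd_valuation_primes F ` {x. unit_in (localization F) x} \<subseteq> Pow (prime_factors F)"
    unfolding odd_valuation_primes_def by blast
next
  show "Pow (prime_factors F) \<subseteq> odd_valuation_primes F ` {x. unit_in (localization F) x}"
  proof
    fix A assume "A \<in> Pow (prime_factors F)"
    then have AF: "A \<subseteq> prime_factors F" by simp
    then have fin: "finite A" and primes: "\<And>p. p \<in> A \<Longrightarrow> prime p"
      by (auto intro: finite_subset)
    define q where "q = (\<Prod>p\<in>A. p ^ (1::nat))"
    have mq: "multiplicity r q = (if r \<in> A then 1 else 0)" if "prime r" for r
      unfolding q_def using fin primes that by (rule multiplicity_prod_prime_powers)
    have q0: "q \<noteq> 0" unfolding q_def using fin primes by (metis not_prime_0 power_one_right prod_zero_iff)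
    have "q dvd F ^ 1"
    proof (rule multiplicity_le_imp_dvd[OF q0])
      fix r :: 'a assume r: "prime r"
      then show "multiplicity r q \<le> multiplicity r (F ^ 1)"
        using mq[OF r] AF prime_factors_multiplicity by (auto simp: Suc_le_eq)
    qed
    then have "unit_in (localization F) (Fract q (F ^ 0))"
      unfolding unit_in_localization_iff[OF F] using q0 by blast
    moreover have "odd_valuation_primes F (Fract q (F ^ 0)) = A"
    proof -
      have "p \<in> prime_factors F \<and> odd (multiplicity p q) \<longleftrightarrow> p \<in> A" for p
        using AF mq[of p] by (cases "p \<in> A") (auto simp: in_prime_factors_iff)
      then show ?thesis unfolding odd_valuation_primes_Fract[OF F q0] by auto
    qed
    ultimately show "A \<in> odd_valuation_primes F ` {x. unit_in (localization F) x}" by force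
  qed
qed

lemma card_image_transfer:
  assumes "f ` A = B" and "\<And>x y. x \<in> A \<Longrightarrow> y \<in> A \<Longrightarrow> g x = g y \<longleftrightarrow> h (f x) = h (f y)"
  shows "card (g ` A) = card (h ` B)"
proof -
  define \<phi> where "\<phi> t = h (f (inv_into A g t))" for t
  have \<phi>: "\<phi> (g x) = h (f x)" if "x \<in> A" for x
    unfolding \<phi>_def using assms(2) that inv_into_into[of "g x" g A] f_inv_into_f[of "g x" g A] by blast
  have "inj_on \<phi> (g ` A)"
    by (rule inj_onI) (auto simp: \<phi> assms(2))
  moreover have "\<phi> ` g ` A = h ` B" using \<phi> assms(1) by (auto simp: image_image)
  ultimately show ?thesis by (metis card_image)
qed

lemma square_class_equiv_image:
  fixes F F' :: "'a::{factorial_semiring,idom}"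
  assumes "subring_iso D (localization F) (localization F')" and "preserves_constant_units D"
    and y: "y \<in> localization F" and equiv: "square_class_equiv F x y"
  shows "square_class_equiv F' (D x) (D y)"
proof -
  interpret subring_iso D "localization F" "localization F'" by fact
  obtain c z where c: "is_unit c" and z: "unit_in (localization F) z" and x: "x = Fract c 1 * z ^ 2 * y"
    using equiv unfolding square_class_equiv_def by blast
  obtain c' where "is_unit c'" "D (Fract c 1) = Fract c' 1"
    using assms(2) c by (rule preserves_constant_unitsD)
  moreover have "D x = D (Fract c 1) * D z ^ 2 * D y"
    unfolding x using unit_in_mem[OF z] Fract_1_in_localization[of c F] y
    by (simp add: hom_mult hom_power subring_mult[OF subring_A] subring_power[OF subring_A])
  ultimately show ?thesis
    unfolding square_class_equiv_def using unit_in_image[OF z] by auto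
qed

lemma card_prime_factors_eq_if_localizations_iso:
  fixes F F' :: "'a::{factorial_semiring,idom}"
  assumes F: "F \<noteq> 0" and F': "F' \<noteq> 0"
    and "subring_iso D (localization F) (localization F')"
    and pres: "preserves_constant_units D"
    and pres_inv: "preserves_constant_units (inv_into (localization F) D)"
  shows "card (prime_factors F) = card (prime_factors F')"
proof -
  interpret subring_iso D "localization F" "localization F'" by fact
  let ?E = "inv_into (localization F) D"
  define U where "U = {x. unit_in (localization F) x}"
  define U' where "U' = {x. unit_in (localization F') x}"
  have "D ` U = U'"
    unfolding U_def U'_def using unit_in_image unit_in_image_iff surj unit_in_mem by blast
  moreover have "odd_valuation_primes F x = odd_valuation_primes F y \<longleftrightarrow>
      odd_valuation_primes F' (D x) = odd_valuation_primes F' (D y)" if "x \<in> U" "y \<in> U" for x y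
  proof -
    have x: "unit_in (localization F) x" and y: "unit_in (localization F) y" using that by (auto simp: U_def)
    have x': "unit_in (localization F') (D x)" and y': "unit_in (localization F') (D y)"
      using unit_in_image x y by auto
    have "square_class_equiv F x y \<longleftrightarrow> square_class_equiv F' (D x) (D y)"
    proof
      show "square_class_equiv F x y \<Longrightarrow> square_class_equiv F' (D x) (D y)"
        using square_class_equiv_image[OF subring_iso_axioms pres unit_in_mem[OF y]] .
      assume "square_class_equiv F' (D x) (D y)"
      then have "square_class_equiv F (?E (D x)) (?E (D y))"
        by (rule square_class_equiv_image[OF subring_iso_inv pres_inv unit_in_mem[OF y']])
      then show "square_class_equiv F x y"
        using inverse_inv unit_in_mem x y by metis
    qed
    then show ?thesis
      using square_class_equiv_imp_odd_valuation_primes_eq odd_valuation_primes_eq_imp_square_class_equiv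
        F F' x y x' y' by metis
  qed
  ultimately have "card (odd_valuation_primes F ` U) = card (odd_valuation_primes F' ` U')"
    by (rule card_image_transfer)
  then have "card (Pow (prime_factors F)) = card (Pow (prime_factors F'))"
    unfolding U_def U'_def odd_valuation_primes_image[OF F] odd_valuation_primes_image[OF F'] .
  then have "(2::nat) ^ card (prime_factors F) = 2 ^ card (prime_factors F')"
    by (simp add: card_Pow)
  then show ?thesis by simp
qed

section \<open>Localisation at a prime element\<close>

lemma dvd_prime_elem_power_imp_unit_times_power:
  fixes p :: "'a::factorial_semiring"
  assumes p: "prime_elem p" and a: "a dvd p ^ m"
  obtains u k where "is_unit u" "a = u * p ^ k"
proof -
  have "a dvd normalize p ^ m" using a dvd_trans dvd_power_same by (metis dvd_normalize_iff dvd_refl)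
  moreover have "prime (normalize p)" using p by (simp add: prime_def)
  ultimately obtain k where "normalize a = normalize (normalize p ^ k)"
    by (metis divides_primepow_weak)
  also have "\<dots> = normalize (p ^ k)"
    by (simp add: associated_iff_dvd dvd_power_same)
  finally show ?thesis using that by (elim associatedE1)
qed

lemma unit_in_localization_prime_elemE:
  fixes F :: "'a::{factorial_semiring,idom}"
  assumes F: "prime_elem F" and u: "unit_in (localization F) x"
  obtains c k n where "is_unit c" "x = Fract (c * F ^ k) (F ^ n)"
proof -
  obtain a n m where "x = Fract a (F ^ n)" "a dvd F ^ m"
    using unit_in_localizationE[OF _ u] F by (metis not_prime_elem_zero)
  then show ?thesis using that dvd_prime_elem_power_imp_unit_times_power[OF F] by metis
qed

lemma Fract_power: "Fract (a::'a::idom) b ^ k = Fract (a ^ k) (b ^ k)"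
  by (induction k) (simp_all add: One_fract_def)

lemma iso_image_of_prime_elem:
  fixes F F' :: "'a::{factorial_semiring,idom}"
  assumes F: "prime_elem F" and F': "prime_elem F'"
    and "subring_iso D (localization F) (localization F')" and pres: "preserves_constant_units D"
  obtains c where "is_unit c" "D (Fract F 1) = Fract (c * F') 1 \<or> D (Fract F 1) = Fract c F'"
proof -
  interpret subring_iso D "localization F" "localization F'" by fact
  have F0: "F \<noteq> 0" and F'0: "F' \<noteq> 0" using F F' by auto
  have "unit_in (localization F) (Fract F 1)"
    using unit_in_localization_Fract_1[OF F0 F0, of 1] by simp
  then obtain c1 i1 n1 where c1: "is_unit c1" and u: "D (Fract F 1) = Fract (c1 * F' ^ i1) (F' ^ n1)"
    using unit_in_image unit_in_localization_prime_elemE[OF F'] by metis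
  have "unit_in (localization F') (Fract F' 1)"
    using unit_in_localization_Fract_1[OF F'0 F'0, of 1] by simp
  then obtain y where y: "unit_in (localization F) y" "Fract F' 1 = D y"
    using surj unit_in_image_iff unit_in_mem by metis
  obtain c i n where c: "is_unit c" and "y = Fract (c * F ^ i) (F ^ n)"
    using unit_in_localization_prime_elemE[OF F y(1)] by blast
  then have y_eq: "y * Fract F 1 ^ n = Fract c 1 * Fract F 1 ^ i"
    using F0 by (simp add: Fract_power eq_fract)
  obtain c2 where c2: "is_unit c2" "D (Fract c 1) = Fract c2 1"
    using pres c by (rule preserves_constant_unitsD)
  \<comment> \<open>As D F = c1 F'^(i1 - n1) and y = c F^(i - n), comparing F'-valuations in D y = F'
    yields (i1 - n1)(i - n) = 1.\<close>
  have "Fract F' 1 * D (Fract F 1) ^ n = Fract c2 1 * D (Fract F 1) ^ i"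
    using arg_cong[OF y_eq, of D] y(2) c2(2) unit_in_mem[OF y(1)]
      Fract_1_in_localization[of F F] Fract_1_in_localization[of c F]
    by (simp add: hom_mult hom_power subring_power[OF subring_A])
  then have "F' * (c1 * F' ^ i1) ^ n * (F' ^ n1) ^ i = c2 * (c1 * F' ^ i1) ^ i * (F' ^ n1) ^ n"
    unfolding u using F'0 by (simp add: Fract_power eq_fract)
  then have "c1 ^ n * F' ^ (1 + i1 * n + n1 * i) = (c2 * c1 ^ i) * F' ^ (i1 * i + n1 * n)"
    by (simp add: power_mult_distrib power_add mult_ac flip: power_mult)
  then have "1 + i1 * n + n1 * i = i1 * i + n1 * n"
    using arg_cong[of _ _ "multiplicity F'"] F' c1 c2(1)
    by (metis is_unit_mult_iff is_unit_power_iff multiplicity_prime_power multiplicity_times_unit_right)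
  then have "(int i1 - int n1) * (int i - int n) = 1"
    by (simp add: algebra_simps flip: of_nat_mult of_nat_add)
  then have "i1 = n1 + 1 \<or> n1 = i1 + 1"
    unfolding zmult_eq_1_iff by linarith
  then have "D (Fract F 1) = Fract (c1 * F') 1 \<or> D (Fract F 1) = Fract c1 F'"
    unfolding u using F'0 by (auto simp: eq_fract)
  then show ?thesis using that c1 by blast
qed

section \<open>Prime factors coprime to F\<close>

lemma prime_not_unit_in_localization:
  fixes F :: "'a::{factorial_semiring,idom}"
  assumes F: "F \<noteq> 0" and p: "prime p" "\<not> p dvd F"
  shows "\<not> unit_in (localization F) (Fract p 1)"
  using unit_in_localization_iff[OF F, of p 0] p prime_dvd_power by auto

lemma irreducible_in_localization_prime:
  fixes F :: "'a::{factorial_semiring,idom}"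
  assumes F: "F \<noteq> 0" and p: "prime p" "\<not> p dvd F"
  shows "irreducible_in (localization F) (Fract p 1)"
proof -
  have "unit_in (localization F) (Fract a (F ^ n)) \<or> unit_in (localization F) (Fract d (F ^ m))"
    if "Fract p 1 = Fract a (F ^ n) * Fract d (F ^ m)" for a n d m
  proof -
    from that have pe: "p * F ^ (n + m) = a * d" using F by (simp add: eq_fract power_add)
    then have "p dvd a \<or> p dvd d" using p prime_dvd_mult_iff by (metis dvd_triv_left)
    then show ?thesis
    proof
      assume "p dvd a"
      then obtain a' where "a = p * a'" by blast
      then have "F ^ (n + m) = a' * d" using pe p by (simp add: mult.assoc)
      then show ?thesis unfolding unit_in_localization_iff[OF F] using F by (metis dvd_triv_right mult_zero_right power_not_zero)
    next
      assume "p dvd d"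
      then obtain d' where "d = p * d'" by blast
      then have "F ^ (n + m) = a * d'" using pe p by (simp add: mult_ac)
      then show ?thesis unfolding unit_in_localization_iff[OF F] using F by (metis dvd_triv_left mult_zero_left power_not_zero)
    qed
  qed
  then have "unit_in (localization F) b \<or> unit_in (localization F) c"
    if "b \<in> localization F" "c \<in> localization F" "Fract p 1 = b * c" for b c
    using that unfolding localization_iff by blast
  moreover have "Fract p 1 \<noteq> 0" using p by (simp add: Zero_fract_def eq_fract)
  ultimately show ?thesis
    unfolding irreducible_in_def
    using Fract_1_in_localization prime_not_unit_in_localization[OF F p] by blast
qed

lemma dvd_in_localization_prime_power_iff:
  fixes F :: "'a::{factorial_semiring,idom}"
  assumes F: "F \<noteq> 0" and p: "prime p" "\<not> p dvd F"
  shows "dvd_in (localization F) (Fract p 1 ^ k) (Fract x 1) \<longleftrightarrow> p ^ k dvd x"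
proof
  assume "dvd_in (localization F) (Fract p 1 ^ k) (Fract x 1)"
  then obtain b n where "Fract x 1 = Fract p 1 ^ k * Fract b (F ^ n)"
    unfolding dvd_in_def Bex_def localization_iff by blast
  then have dvd: "p ^ k dvd x * F ^ n" using F by (simp add: Fract_power eq_fract)
  show "p ^ k dvd x"
  proof (cases "x = 0")
    case False
    have "multiplicity p (x * F ^ n) = multiplicity p x"
      using multiplicity_mult_power[of p x F n] False F p not_dvd_imp_multiplicity_0[of p F] by auto
    then show ?thesis
      using dvd False F p by (simp add: power_dvd_iff_le_multiplicity)
  qed simp
next
  assume "p ^ k dvd x"
  then obtain e where "Fract x 1 = Fract p 1 ^ k * Fract e 1" by (auto simp: Fract_power)
  then show "dvd_in (localization F) (Fract p 1 ^ k) (Fract x 1)"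
    unfolding dvd_in_def using Fract_1_in_localization by blast
qed

lemma irreducible_in_localization_dvd_Fract_1E:
  fixes F y :: "'a::{factorial_semiring,idom}"
  assumes F: "F \<noteq> 0" and y: "y \<noteq> 0" and a: "irreducible_in (localization F) a"
    and dvd: "dvd_in (localization F) a (Fract y 1)"
  obtains q u where "q \<in> prime_factors y" "\<not> q dvd F" "unit_in (localization F) u" "a = u * Fract q 1"
proof -
  obtain b n where ab: "a = Fract b (F ^ n)"
    using a unfolding irreducible_in_def localization_iff by blast
  have b0: "b \<noteq> 0" using a ab by (auto simp: irreducible_in_def Zero_fract_def eq_fract)
  have "\<exists>q. prime q \<and> q dvd b \<and> \<not> q dvd F"
  proof (rule ccontr)
    assume "\<not> ?thesis"
    then have "\<exists>K. b dvd F ^ K" using prime_divisors_dvd_imp_dvd_power[OF F b0] by blast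
    then have "unit_in (localization F) a" unfolding ab unit_in_localization_iff[OF F] using b0 by blast
    then show False using a by (simp add: irreducible_in_def)
  qed
  then obtain q b' where q: "prime q" "\<not> q dvd F" and b': "b = q * b'" by blast
  have a2: "a = Fract b' (F ^ n) * Fract q 1" unfolding ab b' by (simp add: mult.commute)
  then have u: "unit_in (localization F) (Fract b' (F ^ n))"
    using a prime_not_unit_in_localization[OF F q] Fract_in_localization Fract_1_in_localization
    unfolding irreducible_in_def by blast
  obtain e m where "Fract y 1 = a * Fract e (F ^ m)"
    using dvd unfolding dvd_in_def Bex_def localization_iff by blast
  then have "y * F ^ (n + m) = q * (b' * e)"
    using F unfolding ab b' by (simp add: eq_fract power_add mult_ac)
  then have "q dvd y * F ^ (n + m)" by simp
  then have "q dvd y" using q prime_dvd_mult_iff prime_dvd_power by blast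
  then have "q \<in> prime_factors y"
    using q y by (auto simp: in_prime_factors_iff)
  then show ?thesis using that q(2) u a2 by blast
qed

lemma prime_eq_if_associated_in_localization:
  fixes F p q :: "'a::{factorial_semiring,idom}"
  assumes F: "F \<noteq> 0" and p: "prime p" and q: "prime q" "\<not> q dvd F"
    and u: "unit_in (localization F) u" and eq: "Fract p 1 = u * Fract q 1"
  shows "p = q"
proof -
  obtain a n m where "u = Fract a (F ^ n)" using unit_in_localizationE[OF F u] by metis
  then have "q dvd p * F ^ n" using eq F by (simp add: eq_fract)
  then have "q dvd p" using q prime_dvd_mult_iff prime_dvd_power by blast
  then show ?thesis using primes_dvd_imp_eq[OF q(1) p] by simp
qed

lemma iso_Fract_1_multiplicity_preserving_inj:
  fixes F F' x y :: "'a::{factorial_semiring,idom}"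
  assumes F: "F \<noteq> 0" and F': "F' \<noteq> 0" and "subring_iso D (localization F) (localization F')"
    and x: "x \<noteq> 0" and y: "y \<noteq> 0" and coprime: "\<And>p. p \<in> prime_factors x \<Longrightarrow> \<not> p dvd F"
    and w: "unit_in (localization F') w" and Dx: "D (Fract x 1) = w * Fract y 1"
  obtains \<phi> where "inj_on \<phi> (prime_factors x)" "\<phi> ` prime_factors x \<subseteq> prime_factors y"
    "\<And>p. p \<in> prime_factors x \<Longrightarrow> multiplicity (\<phi> p) y = multiplicity p x"
proof -
  interpret subring_iso D "localization F" "localization F'" by fact
  let ?A = "localization F" and ?B = "localization F'"
  define P where "P p q \<longleftrightarrow> q \<in> prime_factors y \<and> \<not> q dvd F' \<and>
    (\<exists>u. unit_in ?B u \<and> D (Fract p 1) = u * Fract q 1)" for p q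
  have "\<exists>q. P p q" if p: "p \<in> prime_factors x" for p
  proof -
    have pF: "prime p" "\<not> p dvd F" using p coprime by auto
    have "dvd_in ?A (Fract p 1) (Fract x 1)"
      using dvd_in_localization_prime_power_iff[OF F pF, of 1 x] p by (simp add: in_prime_factors_iff)
    then have "dvd_in ?B (D (Fract p 1)) (Fract y 1)"
      using dvd_in_image[OF Fract_1_in_localization] Dx dvd_in_unit_mult_right[OF subring_B w] by metis
    then show ?thesis
      unfolding P_def using irreducible_in_localization_dvd_Fract_1E[OF F' y]
        irreducible_in_image[OF irreducible_in_localization_prime[OF F pF]] by metis
  qed
  then obtain \<phi> where \<phi>: "\<And>p. p \<in> prime_factors x \<Longrightarrow> P p (\<phi> p)" by metis
  have "multiplicity (\<phi> p) y = multiplicity p x" if p: "p \<in> prime_factors x" for p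
  proof -
    have pF: "prime p" "\<not> p dvd F" using p coprime by auto
    obtain u where q: "prime (\<phi> p)" "\<not> \<phi> p dvd F'" and u: "unit_in ?B u"
      and Dp: "D (Fract p 1) = u * Fract (\<phi> p) 1"
      using \<phi>[OF p] unfolding P_def by auto
    have "p ^ k dvd x \<longleftrightarrow> \<phi> p ^ k dvd y" for k
    proof -
      have "p ^ k dvd x \<longleftrightarrow> dvd_in ?B (D (Fract p 1 ^ k)) (D (Fract x 1))"
        using dvd_in_localization_prime_power_iff[OF F pF] dvd_in_image_iff
          subring_power[OF subring_A Fract_1_in_localization] Fract_1_in_localization by blast
      also have "\<dots> \<longleftrightarrow> dvd_in ?B (Fract (\<phi> p) 1 ^ k) (Fract y 1)"
        unfolding Dx hom_power[OF Fract_1_in_localization] Dp power_mult_distrib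
          dvd_in_unit_mult_left[OF subring_B unit_in_power[OF subring_B u]]
          dvd_in_unit_mult_right[OF subring_B w] ..
      also have "\<dots> \<longleftrightarrow> \<phi> p ^ k dvd y" using dvd_in_localization_prime_power_iff[OF F' q] .
      finally show ?thesis .
    qed
    then have "k \<le> multiplicity p x \<longleftrightarrow> k \<le> multiplicity (\<phi> p) y" for k
      using x y pF q by (simp add: power_dvd_iff_le_multiplicity)
    then show ?thesis by (meson le_antisym order_refl)
  qed
  moreover have "inj_on \<phi> (prime_factors x)"
  proof (rule inj_onI)
    fix p1 p2 assume p1: "p1 \<in> prime_factors x" and p2: "p2 \<in> prime_factors x" and eq: "\<phi> p1 = \<phi> p2"
    obtain u1 u2 where u1: "unit_in ?B u1" "D (Fract p1 1) = u1 * Fract (\<phi> p1) 1"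
      and u2: "unit_in ?B u2" "D (Fract p2 1) = u2 * Fract (\<phi> p2) 1"
      using \<phi>[OF p1] \<phi>[OF p2] unfolding P_def by blast
    obtain u2' where u2': "u2' \<in> ?B" "u2 * u2' = 1" "unit_in ?B u2'" using u2(1) by (rule unit_inE)
    have "unit_in ?B (u1 * u2')" using unit_in_mult[OF subring_B u1(1) u2'(3)] .
    then obtain v where v: "v \<in> ?A" "unit_in ?A v" "u1 * u2' = D v"
      using surj unit_in_mem unit_in_image_iff by metis
    have "D (Fract p1 1) = D v * D (Fract p2 1)"
      unfolding u1(2) u2(2) eq v(3)[symmetric] using u2'(2) by (metis mult.assoc mult.commute mult_1_right)
    then have "Fract p1 1 = v * Fract p2 1"
      using inj hom_mult v(1) Fract_1_in_localization subring_mult[OF subring_A] by metis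
    then show "p1 = p2"
      using prime_eq_if_associated_in_localization[OF F _ _ _ v(2)] p1 p2 coprime by auto
  qed
  moreover have "\<phi> ` prime_factors x \<subseteq> prime_factors y" using \<phi> unfolding P_def by blast
  ultimately show ?thesis using that by blast
qed

definition exponent_mset :: "'a::{factorial_semiring,idom} \<Rightarrow> nat multiset" where
  "exponent_mset x = image_mset (\<lambda>p. multiplicity p x) (mset_set (prime_factors x))"

lemma nfactors_eq_size_exponent_mset: "nfactors x = size (exponent_mset x)"
  by (simp add: nfactors_def exponent_mset_def)

lemma exps_eq_sorted_exponent_mset: "exps x = sorted_list_of_multiset (exponent_mset x)"
  by (simp add: exps_def exponent_mset_def)

lemma exponent_mset_eq_if_iso_associated:
  fixes F F' x y :: "'a::{factorial_semiring,idom}"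
  assumes F: "F \<noteq> 0" and F': "F' \<noteq> 0" and "subring_iso D (localization F) (localization F')"
    and x: "x \<noteq> 0" and y: "y \<noteq> 0"
    and coprime_x: "\<And>p. p \<in> prime_factors x \<Longrightarrow> \<not> p dvd F"
    and coprime_y: "\<And>p. p \<in> prime_factors y \<Longrightarrow> \<not> p dvd F'"
    and w: "unit_in (localization F') w" and Dx: "D (Fract x 1) = w * Fract y 1"
  shows "exponent_mset x = exponent_mset y"
proof -
  interpret subring_iso D "localization F" "localization F'" by fact
  let ?E = "inv_into (localization F) D"
  obtain \<phi> where \<phi>: "inj_on \<phi> (prime_factors x)" "\<phi> ` prime_factors x \<subseteq> prime_factors y"
    and mult: "\<And>p. p \<in> prime_factors x \<Longrightarrow> multiplicity (\<phi> p) y = multiplicity p x"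
    using iso_Fract_1_multiplicity_preserving_inj[OF F F' subring_iso_axioms x y coprime_x w Dx] by blast
  obtain w' where w': "w' \<in> localization F'" "w * w' = 1" "unit_in (localization F') w'"
    using w by (rule unit_inE)
  have "Fract y 1 = w' * D (Fract x 1)" unfolding Dx using w'(2) by (metis mult.assoc mult.commute mult_1_right)
  then have Ey: "?E (Fract y 1) = ?E w' * Fract x 1"
    using subring_iso.hom_mult[OF subring_iso_inv w'(1) mem[OF Fract_1_in_localization]]
      inverse_inv[OF Fract_1_in_localization] by simp
  moreover have "unit_in (localization F) (?E w')"
    using subring_iso.unit_in_image[OF subring_iso_inv w'(3)] .
  ultimately obtain \<psi> where \<psi>: "inj_on \<psi> (prime_factors y)" "\<psi> ` prime_factors y \<subseteq> prime_factors x"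
    using iso_Fract_1_multiplicity_preserving_inj[of F' F ?E y x, OF F' F subring_iso_inv y x coprime_y]
    by metis
  have "card (prime_factors y) \<le> card (prime_factors x)" using card_inj_on_le[OF \<psi>] by simp
  moreover have "card (prime_factors x) \<le> card (prime_factors y)" using card_inj_on_le[OF \<phi>] by simp
  ultimately have "card (\<phi> ` prime_factors x) = card (prime_factors y)"
    using card_image[OF \<phi>(1)] by simp
  then have "\<phi> ` prime_factors x = prime_factors y"
    using card_subset_eq[OF _ \<phi>(2)] by blast
  then have "image_mset \<phi> (mset_set (prime_factors x)) = mset_set (prime_factors y)"
    using image_mset_mset_set[OF \<phi>(1)] by simp
  then have "exponent_mset y = image_mset (\<lambda>q. multiplicity q y) (image_mset \<phi> (mset_set (prime_factors x)))"
    unfolding exponent_mset_def by simp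
  also have "\<dots> = image_mset (\<lambda>p. multiplicity (\<phi> p) y) (mset_set (prime_factors x))"
    by (simp add: multiset.map_comp comp_def)
  also have "\<dots> = exponent_mset x"
    unfolding exponent_mset_def using mult by (intro image_mset_cong) simp
  finally show ?thesis by simp
qed

lemma unit_translate_nonzero:
  fixes F C :: "'a::{factorial_semiring,idom}"
  assumes "\<not> is_unit F" "is_unit C"
  shows "F - C \<noteq> 0"
proof
  assume "F - C = 0"
  then have "F = C" by simp
  then show False using assms by simp
qed

lemma prime_factor_of_unit_translate_not_dvd:
  fixes F C :: "'a::{factorial_semiring,idom}"
  assumes C: "is_unit C" and p: "p \<in> prime_factors (F - C)"
  shows "\<not> p dvd F"
proof
  assume "p dvd F"
  moreover have "p dvd F - C" "prime p" using p by (auto simp: in_prime_factors_iff)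
  ultimately have "p dvd C" using dvd_diff[of p F "F - C"] by simp
  then show False using C \<open>prime p\<close> dvd_unit_imp_unit not_prime_unit by blast
qed

lemma bij_betw_div_unit:
  assumes "is_unit c"
  shows "bij_betw (\<lambda>x. x div c) units_S units_S"
proof -
  have "c \<noteq> 0" using assms by auto
  then show ?thesis
    by (intro bij_betw_byWitness[where f' = "\<lambda>x. x * c"]) (use assms in \<open>auto simp: units_S_def\<close>)
qed

lemma bij_betw_unit_div:
  assumes c: "is_unit c"
  shows "bij_betw (\<lambda>x. c div x) units_S units_S"
proof -
  have "c div (c div x) = x" if x: "is_unit x" for x
  proof -
    have eq: "x * (c div x) = c" using x by (simp add: unit_imp_dvd dvd_mult_div_cancel)
    moreover have "c \<noteq> 0" using c by auto
    ultimately have "c div x \<noteq> 0" by (metis mult_zero_right)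
    with eq show ?thesis by (metis nonzero_mult_div_cancel_right)
  qed
  then show ?thesis
    by (intro bij_betw_byWitness[where f' = "\<lambda>x. c div x"]) (use c in \<open>auto simp: units_S_def\<close>)
qed

lemma constant_unit_bijection:
  fixes F F' :: "'a::{factorial_semiring,idom}"
  assumes "subring_iso D (localization F) (localization F')"
    and IM: "D ` ((\<lambda>c. Fract c 1) ` units_S) = (\<lambda>c. Fract c 1) ` units_S"
  obtains g where "bij_betw g units_S units_S" "\<And>C. is_unit C \<Longrightarrow> D (Fract C 1) = Fract (g C) 1"
proof -
  interpret subring_iso D "localization F" "localization F'" by fact
  have "\<exists>C'. is_unit C' \<and> D (Fract C 1) = Fract C' 1" if "is_unit C" for C
    using preserves_constant_units_iso_and_inverse(1)[OF subring_iso_axioms IM] that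
    by (metis preserves_constant_unitsD)
  then obtain g where g: "\<And>C. is_unit C \<Longrightarrow> is_unit (g C) \<and> D (Fract C 1) = Fract (g C) 1"
    by metis
  have "bij_betw g units_S units_S"
  proof (rule bij_betw_imageI)
    show "inj_on g units_S"
    proof (rule inj_onI)
      fix C1 C2 assume "C1 \<in> units_S" "C2 \<in> units_S" "g C1 = g C2"
      then have "D (Fract C1 1) = D (Fract C2 1)" using g by (simp add: units_S_def)
      then show "C1 = C2" using inj[OF Fract_1_in_localization Fract_1_in_localization] by (simp add: eq_fract)
    qed
    show "g ` units_S = units_S"
    proof
      show "g ` units_S \<subseteq> units_S" using g by (auto simp: units_S_def)
      show "units_S \<subseteq> g ` units_S"
      proof
        fix C' :: 'a assume "C' \<in> units_S"
        then obtain C where "C \<in> units_S" "Fract C' 1 = D (Fract C 1)" using IM by blast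
        then show "C' \<in> g ` units_S" using g by (auto simp: units_S_def eq_fract)
      qed
    qed
  qed
  then show ?thesis using that g by blast
qed

lemma iso_unit_translates_associated:
  fixes F F' :: "'a::{factorial_semiring,idom}"
  assumes F: "prime_elem F" and F': "prime_elem F'"
    and "subring_iso D (localization F) (localization F')"
    and IM: "D ` ((\<lambda>c. Fract c 1) ` units_S) = (\<lambda>c. Fract c 1) ` units_S"
  obtains \<Theta> where "bij_betw \<Theta> units_S units_S"
    "\<And>C. is_unit C \<Longrightarrow>
       \<exists>w. unit_in (localization F') w \<and> D (Fract (F - C) 1) = w * Fract (F' - \<Theta> C) 1"
proof -
  interpret subring_iso D "localization F" "localization F'" by fact
  have F'0: "F' \<noteq> 0" using F' by auto
  obtain g where g: "bij_betw g units_S units_S" and Dg: "\<And>C. is_unit C \<Longrightarrow> D (Fract C 1) = Fract (g C) 1"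
    using constant_unit_bijection[OF subring_iso_axioms IM] by blast
  have gu: "is_unit (g C)" if "is_unit C" for C
    using bij_betwE[OF g] that by (auto simp: units_S_def)
  obtain c where c: "is_unit c" and DF: "D (Fract F 1) = Fract (c * F') 1 \<or> D (Fract F 1) = Fract c F'"
    using iso_image_of_prime_elem[OF F F' subring_iso_axioms
        preserves_constant_units_iso_and_inverse(1)[OF subring_iso_axioms IM]] by blast
  have DFC: "D (Fract (F - C) 1) = D (Fract F 1) - Fract (g C) 1" if "is_unit C" for C
    using hom_diff[OF Fract_1_in_localization Fract_1_in_localization] Dg[OF that] by simp
  from DF show ?thesis
  proof
    assume DF: "D (Fract F 1) = Fract (c * F') 1"
    have "D (Fract (F - C) 1) = Fract c 1 * Fract (F' - g C div c) 1" if "is_unit C" for C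
      using DFC[OF that] c by (simp add: DF right_diff_distrib unit_imp_dvd)
    moreover have "unit_in (localization F') (Fract c 1)"
      using unit_in_localization_Fract_1[OF F'0, of c 0] c not_is_unit_0 by fastforce
    ultimately show ?thesis
      using that[of "\<lambda>C. g C div c"] bij_betw_trans[OF g bij_betw_div_unit[OF c]]
      unfolding comp_def by blast
  next
    assume DF: "D (Fract F 1) = Fract c F'"
    have "D (Fract (F - C) 1) = Fract (- g C) F' * Fract (F' - c div g C) 1" if "is_unit C" for C
    proof -
      have "- g C * (F' - c div g C) = c - g C * F'"
        using gu[OF that] by (simp add: right_diff_distrib unit_imp_dvd)
      then show ?thesis using DFC[OF that] F'0 by (simp add: DF)
    qed
    moreover have "unit_in (localization F') (Fract (- g C) F')" if "is_unit C" for C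
      using unit_in_localization_iff[OF F'0, of "- g C" 1] gu[OF that] by auto
    ultimately show ?thesis
      using that[of "\<lambda>C. c div g C"] bij_betw_trans[OF g bij_betw_unit_div[OF c]]
      unfolding comp_def by blast
  qed
qed

theorem mainTheorem18:
  fixes F F' :: "'a::{factorial_semiring,idom}"
    and \<Delta> :: "'a fract \<Rightarrow> 'a fract"
  assumes "F \<noteq> 0" and "\<not> is_unit F" and "F' \<noteq> 0" and "\<not> is_unit F'"
    and "ring_iso_on \<Delta> (localization F) (localization F')"
    and "\<Delta> ` ((\<lambda>c. Fract c 1) ` units_S) = (\<lambda>c. Fract c 1) ` units_S"
  shows "nfactors (F - 0) = nfactors (F' - 0) \<and>
        (irreducible F \<longrightarrow> irreducible F' \<longrightarrow>
         (\<exists>\<Theta>. bij_betw \<Theta> units_S units_S \<and>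
            (\<forall>C\<in>units_S. nfactors (F - C) = nfactors (F' - \<Theta> C) \<and>
               (\<forall>i. 1 \<le> i \<and> i \<le> nfactors (F - C) \<longrightarrow>
                    exps (F - C) ! (i - 1) = exps (F' - \<Theta> C) ! (i - 1)))))"
proof -
  have iso: "subring_iso \<Delta> (localization F) (localization F')"
    using assms(1,3,5) by (simp add: subring_iso_def is_subring_localization)
  have "nfactors (F - 0) = nfactors (F' - 0)"
    using card_prime_factors_eq_if_localizations_iso[OF assms(1,3) iso
        preserves_constant_units_iso_and_inverse[OF iso assms(6)]]
    by (simp add: nfactors_def)
  moreover have "\<exists>\<Theta>. bij_betw \<Theta> units_S units_S \<and>
      (\<forall>C\<in>units_S. exponent_mset (F - C) = exponent_mset (F' - \<Theta> C))"
    if "irreducible F" "irreducible F'"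
  proof -
    have "prime_elem F" "prime_elem F'" using that by (simp_all add: prime_elem_iff_irreducible)
    then obtain \<Theta> where \<Theta>: "bij_betw \<Theta> units_S units_S" and assoc: "\<And>C. is_unit C \<Longrightarrow>
        \<exists>w. unit_in (localization F') w \<and> \<Delta> (Fract (F - C) 1) = w * Fract (F' - \<Theta> C) 1"
      using iso_unit_translates_associated[OF _ _ iso assms(6)] by metis
    have "exponent_mset (F - C) = exponent_mset (F' - \<Theta> C)" if "C \<in> units_S" for C
    proof -
      have C: "is_unit C" "is_unit (\<Theta> C)" using that bij_betwE[OF \<Theta>] by (auto simp: units_S_def)
      then show ?thesis
        using assoc[OF C(1)] exponent_mset_eq_if_iso_associated[OF assms(1,3) iso
            unit_translate_nonzero[OF assms(2) C(1)] unit_translate_nonzero[OF assms(4) C(2)]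
            prime_factor_of_unit_translate_not_dvd[OF C(1)] prime_factor_of_unit_translate_not_dvd[OF C(2)]]
        by blast
    qed
    then show ?thesis using \<Theta> by blast
  qed
  ultimately show ?thesis
    unfolding nfactors_eq_size_exponent_mset exps_eq_sorted_exponent_mset by fastforce
qed

end
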